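(* Let $b\ge 2$. For every positive integer $N$ there exist infinitely many positive integers $M$ such that $N\cdot M$ is a $b$-wMRH number. In particular every positive integer divides some $b$-wMRH number.
   Context: Fix a base $b\ge 2$. $s_b(N)$ is the sum of the base-$b$ digits of $N$. For a positive integer $X$, its reversal $X^R$ is the integer whose base-$b$ representation is that of $X$ written in reverse order (leading zeros of the result are dropped). A positive integer $N$ is a $b$-wMRH number if there exists an integer $A\ge 0$ such that $N=(A+s_b(N))\cdot(A+s_b(N))^R$. *)

theory Defs
  imports Main
begin

fun digits :: "nat \<Rightarrow> nat \<Rightarrow> nat list" where
  "digits b n = (if n = 0 \<or> b < 2 then [] else n mod b # digits b (n div b))"

definition digit_sum :: "nat \<Rightarrow> nat \<Rightarrow> nat" where
  "digit_sum b n = sum_list (digits b n)"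

text \<open>Reversal: the number whose base-b digits (most significant first) are the
  digits of X read from least significant to most significant; leading zeros vanish.\<close>
definition reversal :: "nat \<Rightarrow> nat \<Rightarrow> nat" where
  "reversal b x = foldl (\<lambda>acc d. acc * b + d) 0 (digits b x)"

definition wMRH :: "nat \<Rightarrow> nat \<Rightarrow> bool" where
  "wMRH b N \<longleftrightarrow> N > 0 \<and>
     (\<exists>A::nat. N = (A + digit_sum b N) * reversal b (A + digit_sum b N))"

end

theory Submission
  imports Defs "HOL-Library.Infinite_Set"
begin

text \<open>Let \<open>R\<close> be the reversal of \<open>N\<close> and \<open>X = N b\<^sup>k\<close>. The trailing zeros of \<open>X\<close> vanish on
  reversal, so \<open>X\<^sup>R = R\<close>, and \<open>X X\<^sup>R = (N R) b\<^sup>k\<close> has the digit sum \<open>s\<close> of \<open>N R\<close>. Hence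
  \<open>N (b\<^sup>k R)\<close> is \<open>b\<close>-wMRH with \<open>A = X - s\<close> as soon as \<open>b\<^sup>k \<ge> s\<close>, and these multipliers
  \<open>b\<^sup>k R\<close> are unbounded.\<close>

declare digits.simps [simp del]

lemma digits_mult_base:
  assumes "b \<ge> 2"
  shows "digits b (n * b) = (if n = 0 then [] else 0 # digits b n)"
  using assms by (subst digits.simps) simp

lemma digits_mult_base_power:
  assumes "b \<ge> 2" and "n > 0"
  shows "digits b (n * b ^ k) = replicate k 0 @ digits b n"
proof (induction k)
  case 0
  then show ?case by simp
next
  case (Suc k)
  have "n * b ^ Suc k = (n * b ^ k) * b" by (simp add: algebra_simps)
  with Suc show ?case
    using assms digits_mult_base[OF assms(1), of "n * b ^ k"] by (simp only:) simp
qed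

lemma foldl_horner_replicate_zero:
  "foldl (\<lambda>acc d. acc * b + d) 0 (replicate k 0 @ ds) = foldl (\<lambda>acc d. acc * b + d) (0::nat) ds"
  by (induction k) auto

lemma reversal_mult_base_power:
  assumes "b \<ge> 2" and "n > 0"
  shows "reversal b (n * b ^ k) = reversal b n"
  unfolding reversal_def digits_mult_base_power[OF assms] foldl_horner_replicate_zero ..

lemma digit_sum_mult_base_power:
  assumes "b \<ge> 2" and "n > 0"
  shows "digit_sum b (n * b ^ k) = digit_sum b n"
  unfolding digit_sum_def digits_mult_base_power[OF assms] by simp

lemma digits_has_pos:
  assumes "b \<ge> 2" and "n > 0"
  shows "\<exists>d\<in>set (digits b n). d > 0"
  using assms(2)
proof (induction n rule: less_induct)
  case (less n)
  have digits_n: "digits b n = n mod b # digits b (n div b)"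
    using less.prems assms(1) by (subst digits.simps) simp
  show ?case
  proof (cases "n mod b = 0")
    case True
    then have "n div b > 0" "n div b < n"
      using less.prems assms(1) by (auto elim: dvdE simp: mod_eq_0_iff_dvd)
    with less.IH show ?thesis by (auto simp: digits_n)
  next
    case False
    then show ?thesis by (simp add: digits_n)
  qed
qed

lemma foldl_horner_pos:
  "b > 0 \<Longrightarrow> a > 0 \<or> (\<exists>d\<in>set ds. d > 0) \<Longrightarrow> foldl (\<lambda>acc d. acc * b + d) (a::nat) ds > 0"
  by (induction ds arbitrary: a) auto

lemma reversal_pos:
  assumes "b \<ge> 2" and "n > 0"
  shows "reversal b n > 0"
  unfolding reversal_def using assms digits_has_pos foldl_horner_pos by simp

lemma wMRH_mult_reversal:
  assumes "x > 0" and "reversal b x > 0" and "digit_sum b (x * reversal b x) \<le> x"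
  shows "wMRH b (x * reversal b x)"
  unfolding wMRH_def
proof
  show "x * reversal b x > 0" using assms(1,2) by simp
  let ?A = "x - digit_sum b (x * reversal b x)"
  have "?A + digit_sum b (x * reversal b x) = x" using assms(3) by simp
  then show "\<exists>A. x * reversal b x =
      (A + digit_sum b (x * reversal b x)) * reversal b (A + digit_sum b (x * reversal b x))"
    by metis
qed

lemma wMRH_mult_base_power_reversal:
  assumes "b \<ge> 2" and "N > 0" and "digit_sum b (N * reversal b N) \<le> b ^ k"
  shows "wMRH b (N * (b ^ k * reversal b N))"
proof -
  let ?X = "N * b ^ k"
  have reversal_X: "reversal b ?X = reversal b N"
    using reversal_mult_base_power assms(1,2) by simp
  have "digit_sum b (?X * reversal b ?X) = digit_sum b (N * reversal b N * b ^ k)"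
    by (simp add: reversal_X algebra_simps)
  also have "\<dots> = digit_sum b (N * reversal b N)"
    using digit_sum_mult_base_power reversal_pos assms(1,2) by simp
  also have "\<dots> \<le> ?X" using assms(2,3) by (simp add: le_trans[OF _ mult_le_mono1[of 1 N]])
  finally have "wMRH b (?X * reversal b ?X)"
    using wMRH_mult_reversal[of ?X b] reversal_pos[of b ?X] assms(1,2) by simp
  then show ?thesis by (simp add: reversal_X algebra_simps)
qed

theorem corollary15:
  fixes b N :: nat
  assumes "b \<ge> 2" and "N > 0"
  shows "infinite {M::nat. M > 0 \<and> wMRH b (N * M)}
         \<and> (\<exists>K. N dvd K \<and> wMRH b K)"
proof -
  define R where "R = reversal b N"
  define s where "s = digit_sum b (N * R)"
  have R_pos: "R > 0" using reversal_pos assms R_def by simp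
  have multiplier: "b ^ k * R \<in> {M. M > 0 \<and> wMRH b (N * M)} \<and> k \<le> b ^ k * R" if "s \<le> k" for k
  proof -
    have k_le: "k \<le> b ^ k" using power_gt_expt[of b k] assms(1) by simp
    also have "b ^ k \<le> b ^ k * R" using R_pos by simp
    finally have "k \<le> b ^ k * R" .
    moreover have "digit_sum b (N * reversal b N) \<le> b ^ k"
      using that k_le unfolding s_def R_def by linarith
    then have "wMRH b (N * (b ^ k * R))"
      unfolding R_def by (rule wMRH_mult_base_power_reversal[OF assms])
    ultimately show ?thesis using R_pos assms(1) by simp
  qed
  have "infinite {M. M > 0 \<and> wMRH b (N * M)}"
    unfolding infinite_nat_iff_unbounded_le
  proof
    fix m
    show "\<exists>M\<ge>m. M \<in> {M. M > 0 \<and> wMRH b (N * M)}"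
      using multiplier[of "m + s"] by (intro exI[of _ "b ^ (m + s) * R"]) simp
  qed
  moreover have "wMRH b (N * (b ^ s * R))" using multiplier[of s] by simp
  then have "\<exists>K. N dvd K \<and> wMRH b K" by (intro exI[of _ "N * (b ^ s * R)"]) simp
  ultimately show ?thesis ..
qed

end
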